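(* Let $\Gamma$ be a $\mathbb{D}_n$-symmetric billiard curve and let $H=\langle\rho,\sigma\rangle\subset\mathbb{D}_n$ be a dihedral subgroup of order $4$, generated by a rotation $\rho$ of order $2$ and a reflection $\sigma$. Let $z\in\Gamma^{\mathbb{Z}}$ be a billiard sequence of minimal period $p\ge3$ with spatiotemporal symmetry group $H(z)=H$. Then $p$ is even and exactly one of the following holds: - (I) $\rho(z_i)=z_{p/2+i}$ for all $i$, and $\sigma(z_i)=z_{k-i}$ for all $i$ for a unique $0\le k<p$. - (II) $\rho(z_i)=z_{k-i}$ for all $i$ for a unique odd $0<k<p$, and either $\sigma(z_i)=z_{p/2+i}$ for all $i$ or $(\rho\sigma)(z_i)=z_{p/2+i}$ for all $i$.
   Context: $\mathbb{D}_n=\langle R,S\rangle$, where $R$ is rotation by $2\pi/n$ and $S$ is the horizontal reflection. A $\mathbb{D}_n$-symmetric billiard curve is a $C^2$ simple closed $\mathbb{D}_n$-invariant curve bounding a strictly convex domain. A billiard sequence is $z\in\Gamma^{\mathbb{Z}}$ with $z_i\ne z_{i+1}$. $H(z)$ is the set of $h\in\mathbb{D}_n$ for which there is $k\in\mathbb{Z}$ with $h(z_i)=z_{k+i}$ for all $i$ or $h(z_i)=z_{k-i}$ for all $i$. *)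

theory Defs
  imports "HOL-Analysis.Analysis"
begin

text \<open>The plane is identified with the complex numbers. R is rotation by 2 pi/n,
  S is the horizontal reflection (complex conjugation). Elements of D_n are
  represented as the maps themselves.\<close>

definition rotD :: "nat \<Rightarrow> int \<Rightarrow> complex \<Rightarrow> complex" where
  "rotD n j = (\<lambda>w. cis (2 * pi * real_of_int j / real n) * w)"

definition reflD :: "nat \<Rightarrow> int \<Rightarrow> complex \<Rightarrow> complex" where
  "reflD n j = (\<lambda>w. cis (2 * pi * real_of_int j / real n) * cnj w)"

definition dihedral :: "nat \<Rightarrow> (complex \<Rightarrow> complex) set" where
  "dihedral n = range (rotD n) \<union> range (reflD n)"

definition gen_subgroup :: "(complex \<Rightarrow> complex) set \<Rightarrow> (complex \<Rightarrow> complex) set" where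
  "gen_subgroup A = \<Inter>{K. id \<in> K \<and> A \<subseteq> K \<and> (\<forall>f\<in>K. \<forall>g\<in>K. f \<circ> g \<in> K)}"

definition C2_simple_closed_curve :: "complex set \<Rightarrow> bool" where
  "C2_simple_closed_curve \<Gamma> \<longleftrightarrow>
     (\<exists>\<gamma> \<gamma>' \<gamma>''. (\<forall>t. \<gamma> (t + 1) = \<gamma> t) \<and> inj_on \<gamma> {0..<1}
        \<and> (\<forall>t. (\<gamma> has_vector_derivative \<gamma>' t) (at t))
        \<and> (\<forall>t. (\<gamma>' has_vector_derivative \<gamma>'' t) (at t))
        \<and> continuous_on UNIV \<gamma>''
        \<and> (\<forall>t. \<gamma>' t \<noteq> 0)
        \<and> \<Gamma> = \<gamma> ` {0..1})"

definition bounds_strictly_convex_domain :: "complex set \<Rightarrow> bool" where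
  "bounds_strictly_convex_domain \<Gamma> \<longleftrightarrow>
     (\<exists>\<Omega>. open \<Omega> \<and> bounded \<Omega> \<and> frontier \<Omega> = \<Gamma>
        \<and> (\<forall>x\<in>closure \<Omega>. \<forall>y\<in>closure \<Omega>. x \<noteq> y \<longrightarrow> open_segment x y \<subseteq> \<Omega>))"

definition symmetric_billiard_curve :: "nat \<Rightarrow> complex set \<Rightarrow> bool" where
  "symmetric_billiard_curve n \<Gamma> \<longleftrightarrow>
     C2_simple_closed_curve \<Gamma> \<and> bounds_strictly_convex_domain \<Gamma>
     \<and> (\<forall>g\<in>dihedral n. g ` \<Gamma> = \<Gamma>)"

definition billiard_sequence :: "complex set \<Rightarrow> (int \<Rightarrow> complex) \<Rightarrow> bool" where
  "billiard_sequence \<Gamma> z \<longleftrightarrow> (\<forall>i. z i \<in> \<Gamma> \<and> z i \<noteq> z (i + 1))"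

definition minimal_period :: "(int \<Rightarrow> complex) \<Rightarrow> int \<Rightarrow> bool" where
  "minimal_period z p \<longleftrightarrow> p > 0 \<and> (\<forall>i. z (i + p) = z i)
     \<and> (\<forall>q. 0 < q \<and> q < p \<longrightarrow> \<not> (\<forall>i. z (i + q) = z i))"

definition st_sym_group :: "nat \<Rightarrow> (int \<Rightarrow> complex) \<Rightarrow> (complex \<Rightarrow> complex) set" where
  "st_sym_group n z = {h \<in> dihedral n. \<exists>k. (\<forall>i. h (z i) = z (k + i)) \<or> (\<forall>i. h (z i) = z (k - i))}"

end

theory Submission
  imports Defs
begin

text \<open>Strict convexity forbids three distinct collinear points on \<Gamma>. Hence no orbit point is
  the centre (0 and \<plusminus>z(i+1) would be collinear), so \<rho> = -id moves every point, and no
  reflection fixes the whole orbit (consecutive points on its axis would force period 2).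
  An involution acting as a shift by s has 2s \<equiv> 0 mod p; as it moves the orbit, p is even
  and s \<equiv> p/2. If \<rho> is a shift it is the half-period shift, so \<sigma> cannot be one (else \<sigma> or
  \<rho>\<sigma> would fix the orbit) and \<sigma> is a reversal. Otherwise \<rho> is a reversal by an odd index
  (an even index k would give the fixed point z(k/2)), and whichever of \<sigma>, \<rho>\<sigma> is a shift
  is the half-period shift.\<close>

lemma strictly_convex_collinear_triple:
  assumes "bounds_strictly_convex_domain \<Gamma>" "a \<in> \<Gamma>" "b \<in> \<Gamma>" "c \<in> \<Gamma>" "collinear {a, b, c}"
  shows "a = b \<or> b = c \<or> a = c"
proof (rule ccontr)
  assume distinct: "\<not> (a = b \<or> b = c \<or> a = c)"
  obtain \<Omega> where \<Omega>: "open \<Omega>" "frontier \<Omega> = \<Gamma>"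
    "\<forall>x\<in>closure \<Omega>. \<forall>y\<in>closure \<Omega>. x \<noteq> y \<longrightarrow> open_segment x y \<subseteq> \<Omega>"
    using assms(1) unfolding bounds_strictly_convex_domain_def by blast
  have "\<Gamma> \<subseteq> closure \<Omega>" "\<Gamma> \<inter> \<Omega> = {}"
    using \<Omega>(1,2) by (auto simp: frontier_def interior_open)
  then have no_middle: "x \<notin> open_segment y w" if "x \<in> \<Gamma>" "y \<in> \<Gamma>" "w \<in> \<Gamma>" "y \<noteq> w" for x y w
    using \<Omega>(3) that by blast
  have "a \<in> open_segment b c \<or> b \<in> open_segment c a \<or> c \<in> open_segment a b"
    using assms(5) distinct unfolding collinear_between_cases between_mem_segment open_segment_def
    by blast
  then show False
    using no_middle[OF assms(2,3,4)] no_middle[OF assms(3,4,2)] no_middle[OF assms(4,2,3)] distinct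
    by blast
qed

lemma origin_not_on_symmetric_strictly_convex_curve:
  assumes "bounds_strictly_convex_domain \<Gamma>" "\<forall>w\<in>\<Gamma>. - w \<in> \<Gamma>" "x \<in> \<Gamma>" "x \<noteq> 0"
  shows "0 \<notin> \<Gamma>"
proof
  assume "0 \<in> \<Gamma>"
  moreover have "collinear {0, x, - x}"
    unfolding collinear_lemma by (metis scaleR_minus1_left)
  ultimately show False
    using strictly_convex_collinear_triple[OF assms(1), of 0 x "- x"] assms(2-4) by auto
qed

lemma collinear_reflection_fixed_points: "collinear {w :: complex. d * cnj w = w}"
proof (cases "\<exists>x. d * cnj x = x \<and> x \<noteq> 0")
  case True
  then obtain x where x: "d * cnj x = x" "x \<noteq> 0" by blast
  have on_line: "w = Re (w / x) *\<^sub>R x" if "d * cnj w = w" for w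
  proof -
    have "d \<noteq> 0" using x by auto
    then have "cnj (w / x) = (d * cnj w) / (d * cnj x)" by simp
    then have "cnj (w / x) = w / x"
      using x(1) that by simp
    then have "w / x = of_real (Re (w / x))" by (simp add: Reals_cnj_iff of_real_Re)
    then show ?thesis using x(2) by (simp add: scaleR_conv_of_real field_simps)
  qed
  then have "\<forall>w\<in>{w. d * cnj w = w}. \<exists>c. w = 0 + c *\<^sub>R x"
    by (simp only: add_0_left mem_Collect_eq) blast
  then show ?thesis unfolding collinear_alt by blast
next
  case False
  then have "{w. d * cnj w = w} \<subseteq> {0}" by auto
  then show ?thesis using collinear_subset collinear_sing by blast
qed

lemma billiard_sequence_not_collinear:
  assumes "bounds_strictly_convex_domain \<Gamma>" "billiard_sequence \<Gamma> z" "minimal_period z p" "p \<ge> 3"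
  shows "\<not> collinear (range z)"
proof
  assume line: "collinear (range z)"
  have "z (i + 2) = z i" for i
  proof -
    have "collinear {z i, z (i + 1), z (i + 1 + 1)}" by (rule collinear_subset[OF line]) auto
    moreover have "z i \<noteq> z (i + 1)" "z (i + 1) \<noteq> z (i + 1 + 1)"
      and "z i \<in> \<Gamma>" "z (i + 1) \<in> \<Gamma>" "z (i + 1 + 1) \<in> \<Gamma>"
      using assms(2) unfolding billiard_sequence_def by blast+
    ultimately have "z (i + 1 + 1) = z i"
      using strictly_convex_collinear_triple[OF assms(1)] by metis
    then show ?thesis by (simp add: add.assoc)
  qed
  moreover have "(0::int) < 2" "2 < p" using assms(4) by auto
  ultimately show False using assms(3) unfolding minimal_period_def by blast
qed

lemma periodic_shift_mult:
  fixes z :: "int \<Rightarrow> 'a"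
  assumes "\<forall>i. z (i + p) = z i"
  shows "z (i + m * p) = z i"
proof (induction m rule: int_induct[where k = 0])
  case (step1 m)
  then show ?case using assms by (metis add.assoc distrib_right mult_1)
next
  case (step2 m)
  then show ?case using assms[rule_format, of "i + (m - 1) * p"] by (simp add: algebra_simps)
qed simp

lemma periodic_mod:
  fixes z :: "int \<Rightarrow> 'a"
  assumes "\<forall>i. z (i + p) = z i"
  shows "z i = z (i mod p)"
  using periodic_shift_mult[OF assms, of "i mod p" "i div p"] by simp

lemma minimal_period_shift_iff:
  assumes "minimal_period z p"
  shows "(\<forall>i. z (i + q) = z i) \<longleftrightarrow> p dvd q"
proof
  have p: "p > 0" "\<forall>i. z (i + p) = z i" "\<forall>r. 0 < r \<and> r < p \<longrightarrow> \<not> (\<forall>i. z (i + r) = z i)"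
    using assms unfolding minimal_period_def by auto
  assume shift: "\<forall>i. z (i + q) = z i"
  have "z (i + q mod p) = z i" for i
  proof -
    have "z (i + q mod p) = z ((i + q) mod p)"
      using periodic_mod[OF p(2)] by (metis mod_add_right_eq)
    also have "\<dots> = z i"
      using periodic_mod[OF p(2), of "i + q"] shift by simp
    finally show ?thesis .
  qed
  then have "\<not> (0 < q mod p)" using p(1,3) by auto
  then show "p dvd q" using p(1) by (simp add: dvd_eq_mod_eq_0 order_less_le)
next
  assume "p dvd q"
  then obtain m where "q = m * p" by (metis dvd_def mult.commute)
  then show "\<forall>i. z (i + q) = z i"
    using periodic_shift_mult assms unfolding minimal_period_def by blast
qed

lemma reversal_index_unique:
  assumes "minimal_period z p" "\<forall>i. h (z i) = z (s - i)"
  shows "\<exists>!k. 0 \<le> k \<and> k < p \<and> (\<forall>i. h (z i) = z (k - i))"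
proof -
  have p: "p > 0" using assms(1) unfolding minimal_period_def by simp
  have index_iff: "(\<forall>i. h (z i) = z (k - i)) \<longleftrightarrow> k mod p = s mod p" for k
  proof -
    have "(\<forall>i. h (z i) = z (k - i)) \<longleftrightarrow> (\<forall>i. z (s - i) = z (k - i))"
      using assms(2) by simp
    also have "\<dots> \<longleftrightarrow> (\<forall>j. z (j + (k - s)) = z j)"
      by (metis (no_types, opaque_lifting) add.commute diff_add_cancel diff_diff_eq2 diff_diff_cancel)
    also have "\<dots> \<longleftrightarrow> k mod p = s mod p"
      by (simp add: minimal_period_shift_iff[OF assms(1)] mod_eq_dvd_iff)
    finally show ?thesis .
  qed
  show ?thesis
    by (rule ex1I[of _ "s mod p"]) (use p index_iff in auto)
qed

lemma half_period_residue:
  fixes p s :: int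
  assumes "p dvd 2 * s" "\<not> p dvd s"
  shows "even p \<and> p dvd s - p div 2"
proof -
  obtain t where t: "2 * s = p * t" using assms(1) by (auto elim: dvdE)
  have "odd t"
  proof
    assume "even t"
    then have "s = p * (t div 2)" using t by auto
    then show False using assms(2) by simp
  qed
  moreover have "even (p * t)" using t by (metis dvd_triv_left)
  ultimately have "even p" by simp
  moreover have "s - p div 2 = p * ((t - 1) div 2)"
    using t \<open>even p\<close> \<open>odd t\<close> by (auto elim!: evenE oddE simp: algebra_simps)
  ultimately show ?thesis by simp
qed

lemma involution_shift_half_period:
  assumes "minimal_period z p" "h \<circ> h = id" "\<forall>i. h (z i) = z (s + i)" "\<not> (\<forall>i. h (z i) = z i)"
  shows "even p \<and> (\<forall>i. h (z i) = z (p div 2 + i))"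
proof -
  have "z i = z (i + 2 * s)" for i
  proof -
    have "z i = h (h (z i))" using fun_cong[OF assms(2), of "z i"] by simp
    also have "\<dots> = z (i + 2 * s)" using assms(3) by (simp add: algebra_simps)
    finally show ?thesis .
  qed
  then have "p dvd 2 * s" using minimal_period_shift_iff[OF assms(1)] by metis
  moreover have "\<not> p dvd s" using minimal_period_shift_iff[OF assms(1)] assms(3,4) by (metis add.commute)
  ultimately have half: "even p \<and> p dvd s - p div 2" by (rule half_period_residue)
  have "z (s + i) = z (p div 2 + i)" for i
    using half minimal_period_shift_iff[OF assms(1), of "s - p div 2"]
    by (metis add.commute diff_add_cancel add.assoc)
  then show ?thesis using half assms(3) by simp
qed

definition type_I :: "(int \<Rightarrow> complex) \<Rightarrow> int \<Rightarrow> (complex \<Rightarrow> complex) \<Rightarrow> (complex \<Rightarrow> complex) \<Rightarrow> bool"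
  where "type_I z p \<rho> \<sigma> \<longleftrightarrow> (\<forall>i. \<rho> (z i) = z (p div 2 + i)) \<and>
    (\<exists>!k. 0 \<le> k \<and> k < p \<and> (\<forall>i. \<sigma> (z i) = z (k - i)))"

definition type_II :: "(int \<Rightarrow> complex) \<Rightarrow> int \<Rightarrow> (complex \<Rightarrow> complex) \<Rightarrow> (complex \<Rightarrow> complex) \<Rightarrow> bool"
  where "type_II z p \<rho> \<sigma> \<longleftrightarrow>
    (\<exists>k. 0 < k \<and> k < p \<and> odd k \<and> (\<forall>i. \<rho> (z i) = z (k - i)) \<and>
      (\<forall>k'. 0 \<le> k' \<and> k' < p \<and> (\<forall>i. \<rho> (z i) = z (k' - i)) \<longrightarrow> k' = k)) \<and>
    ((\<forall>i. \<sigma> (z i) = z (p div 2 + i)) \<or> (\<forall>i. (\<rho> \<circ> \<sigma>) (z i) = z (p div 2 + i)))"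

locale klein_symmetric_orbit =
  fixes z :: "int \<Rightarrow> complex" and p :: int and \<rho> \<sigma> :: "complex \<Rightarrow> complex"
  assumes period: "minimal_period z p"
    and rho_involution: "\<rho> \<circ> \<rho> = id"
    and sigma_involution: "\<sigma> \<circ> \<sigma> = id"
    and rho_sigma_involution: "(\<rho> \<circ> \<sigma>) \<circ> (\<rho> \<circ> \<sigma>) = id"
    and rho_moves: "\<And>i. \<rho> (z i) \<noteq> z i"
    and sigma_moves: "\<not> (\<forall>i. \<sigma> (z i) = z i)"
    and rho_sigma_moves: "\<not> (\<forall>i. (\<rho> \<circ> \<sigma>) (z i) = z i)"
    and rho_symmetry: "\<exists>k. (\<forall>i. \<rho> (z i) = z (k + i)) \<or> (\<forall>i. \<rho> (z i) = z (k - i))"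
    and sigma_symmetry: "\<exists>k. (\<forall>i. \<sigma> (z i) = z (k + i)) \<or> (\<forall>i. \<sigma> (z i) = z (k - i))"
begin

lemma rho_inverse: "\<rho> (\<rho> w) = w"
  using fun_cong[OF rho_involution] by simp

lemma type_I_if_rho_shifts:
  assumes "\<forall>i. \<rho> (z i) = z (k + i)"
  shows "even p \<and> type_I z p \<rho> \<sigma> \<and> \<not> type_II z p \<rho> \<sigma>"
proof -
  have "even p" and rho_half: "\<forall>i. \<rho> (z i) = z (p div 2 + i)"
    using involution_shift_half_period[OF period rho_involution assms] rho_moves by auto
  have rho_back: "\<rho> (z (p div 2 + i)) = z i" for i
    using rho_inverse rho_half by metis
  have no_sigma_half: "\<not> (\<forall>i. \<sigma> (z i) = z (p div 2 + i))"
    using rho_sigma_moves rho_back by (metis comp_apply)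
  have no_rho_sigma_half: "\<not> (\<forall>i. (\<rho> \<circ> \<sigma>) (z i) = z (p div 2 + i))"
    using sigma_moves rho_back rho_inverse by (metis comp_apply)
  have "\<not> (\<exists>s. \<forall>i. \<sigma> (z i) = z (s + i))"
    using involution_shift_half_period[OF period sigma_involution] sigma_moves no_sigma_half by blast
  then obtain s where "\<forall>i. \<sigma> (z i) = z (s - i)"
    using sigma_symmetry by blast
  then have "\<exists>!k. 0 \<le> k \<and> k < p \<and> (\<forall>i. \<sigma> (z i) = z (k - i))"
    by (rule reversal_index_unique[OF period])
  then show ?thesis
    using \<open>even p\<close> rho_half no_sigma_half no_rho_sigma_half
    unfolding type_I_def type_II_def by blast
qed

lemma type_II_if_rho_reverses:
  assumes "\<not> (\<exists>k. \<forall>i. \<rho> (z i) = z (k + i))"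
  shows "even p \<and> type_II z p \<rho> \<sigma> \<and> \<not> type_I z p \<rho> \<sigma>"
proof -
  obtain k where "\<forall>i. \<rho> (z i) = z (k - i)"
    using rho_symmetry assms by blast
  then obtain k where k: "0 \<le> k" "k < p" "\<forall>i. \<rho> (z i) = z (k - i)"
    and unique: "\<forall>k'. 0 \<le> k' \<and> k' < p \<and> (\<forall>i. \<rho> (z i) = z (k' - i)) \<longrightarrow> k' = k"
    using reversal_index_unique[OF period] by metis
  have "odd k"
  proof
    assume "even k"
    then have "\<rho> (z (k div 2)) = z (k div 2)"
      using k(3) by (metis add_diff_cancel_left' dvd_mult_div_cancel mult_2)
    then show False using rho_moves by blast
  qed
  then have "0 < k" using k(1) by (cases "k = 0") auto
  have half: "even p \<and> ((\<forall>i. \<sigma> (z i) = z (p div 2 + i)) \<or> (\<forall>i. (\<rho> \<circ> \<sigma>) (z i) = z (p div 2 + i)))"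
  proof (cases "\<exists>s. \<forall>i. \<sigma> (z i) = z (s + i)")
    case True
    then show ?thesis
      using involution_shift_half_period[OF period sigma_involution] sigma_moves by blast
  next
    case False
    then obtain s where "\<forall>i. \<sigma> (z i) = z (s - i)"
      using sigma_symmetry by blast
    then have "\<forall>i. (\<rho> \<circ> \<sigma>) (z i) = z ((k - s) + i)"
      using k(3) by (simp add: algebra_simps)
    then show ?thesis
      using involution_shift_half_period[OF period rho_sigma_involution] rho_sigma_moves by blast
  qed
  show ?thesis
    using half k \<open>odd k\<close> \<open>0 < k\<close> unique assms
    unfolding type_I_def type_II_def by blast
qed

lemma classification:
  "even p \<and> (type_I z p \<rho> \<sigma> \<and> \<not> type_II z p \<rho> \<sigma> \<or> type_II z p \<rho> \<sigma> \<and> \<not> type_I z p \<rho> \<sigma>)"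
  using type_I_if_rho_shifts type_II_if_rho_reverses by blast

end

lemma rotD_involution_eq_uminus:
  assumes "\<rho> \<in> range (rotD n)" "\<rho> \<noteq> id" "\<rho> \<circ> \<rho> = id"
  shows "\<rho> = uminus"
proof -
  obtain c where c: "\<rho> = (\<lambda>w. c * w)"
    using assms(1) unfolding rotD_def by blast
  have "c * c = 1" using fun_cong[OF assms(3), of 1] c by simp
  moreover have "c \<noteq> 1" using assms(2) c by (auto simp: id_def)
  ultimately have "c = -1"
    by (metis mult_cancel_left2 mult_minus_left square_eq_1_iff)
  then show ?thesis using c by (simp add: fun_eq_iff)
qed

lemma unit_reflection_involution:
  assumes "cmod c = 1"
  shows "(\<lambda>w. c * cnj w) \<circ> (\<lambda>w. c * cnj w) = id"
proof -
  have "c * cnj c = 1" using complex_norm_square[of c] assms by simp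
  then show ?thesis by (simp add: fun_eq_iff mult.assoc[symmetric])
qed

lemma generators_in_gen_subgroup: "A \<subseteq> gen_subgroup A"
  unfolding gen_subgroup_def by blast

lemma billiard_sequence_nonzero:
  assumes "bounds_strictly_convex_domain \<Gamma>" "\<forall>w\<in>\<Gamma>. - w \<in> \<Gamma>" "billiard_sequence \<Gamma> z"
  shows "z i \<noteq> 0"
proof
  assume "z i = 0"
  moreover have "z i \<in> \<Gamma>" "z (i + 1) \<in> \<Gamma>" "z i \<noteq> z (i + 1)"
    using assms(3) unfolding billiard_sequence_def by auto
  ultimately show False
    using origin_not_on_symmetric_strictly_convex_curve[OF assms(1,2), of "z (i + 1)"] by auto
qed

lemma billiard_sequence_not_fixed_by_reflection:
  assumes "bounds_strictly_convex_domain \<Gamma>" "billiard_sequence \<Gamma> z" "minimal_period z p" "p \<ge> 3"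
  shows "\<not> (\<forall>i. c * cnj (z i) = z i)"
  using billiard_sequence_not_collinear[OF assms] collinear_subset[OF collinear_reflection_fixed_points]
  by blast

lemma symmetric_billiard_orbit_klein:
  assumes "symmetric_billiard_curve n \<Gamma>" "billiard_sequence \<Gamma> z" "minimal_period z p" "p \<ge> 3"
    and "\<sigma> \<in> range (reflD n)" "uminus \<in> st_sym_group n z" "\<sigma> \<in> st_sym_group n z"
  shows "klein_symmetric_orbit z p uminus \<sigma>"
proof -
  have convex: "bounds_strictly_convex_domain \<Gamma>" and invariant: "\<forall>g\<in>dihedral n. g ` \<Gamma> = \<Gamma>"
    using assms(1) unfolding symmetric_billiard_curve_def by auto
  obtain c where sigma: "\<sigma> = (\<lambda>w. c * cnj w)" and "cmod c = 1"
    using assms(5) unfolding reflD_def by auto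
  have rho_sigma: "uminus \<circ> \<sigma> = (\<lambda>w. - c * cnj w)" and "cmod (- c) = 1"
    using sigma \<open>cmod c = 1\<close> by auto
  have "uminus ` \<Gamma> = \<Gamma>"
    using invariant assms(6) unfolding st_sym_group_def by blast
  then have "\<forall>w\<in>\<Gamma>. - w \<in> \<Gamma>" by auto
  have "\<exists>k. (\<forall>i. - z i = z (k + i)) \<or> (\<forall>i. - z i = z (k - i))"
    "\<exists>k. (\<forall>i. \<sigma> (z i) = z (k + i)) \<or> (\<forall>i. \<sigma> (z i) = z (k - i))"
    using assms(6,7) unfolding st_sym_group_def by auto
  moreover have "- z i \<noteq> z i" for i
    using billiard_sequence_nonzero[OF convex \<open>\<forall>w\<in>\<Gamma>. - w \<in> \<Gamma>\<close> assms(2)] by simp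
  moreover have "\<not> (\<forall>i. \<sigma> (z i) = z i)" "\<not> (\<forall>i. (uminus \<circ> \<sigma>) (z i) = z i)"
    using billiard_sequence_not_fixed_by_reflection[OF convex assms(2-4), of c]
      billiard_sequence_not_fixed_by_reflection[OF convex assms(2-4), of "- c"]
      sigma rho_sigma by (simp_all only: comp_apply) blast+
  moreover have "\<sigma> \<circ> \<sigma> = id"
    unfolding sigma by (rule unit_reflection_involution) fact
  moreover have "(uminus \<circ> \<sigma>) \<circ> (uminus \<circ> \<sigma>) = id"
    unfolding rho_sigma by (rule unit_reflection_involution) fact
  moreover have "uminus \<circ> uminus = (id :: complex \<Rightarrow> complex)" by (simp add: fun_eq_iff)
  ultimately show ?thesis
    using assms(3) by unfold_locales
qed

theorem mainTheorem10:
  fixes n :: nat and \<Gamma> :: "complex set" and z :: "int \<Rightarrow> complex"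
    and H :: "(complex \<Rightarrow> complex) set" and \<rho> \<sigma> :: "complex \<Rightarrow> complex" and p :: int
  assumes "n \<ge> 1"
    and "symmetric_billiard_curve n \<Gamma>"
    and "\<rho> \<in> range (rotD n)" and "\<rho> \<noteq> id" and "\<rho> \<circ> \<rho> = id"
    and "\<sigma> \<in> range (reflD n)"
    and "H = gen_subgroup {\<rho>, \<sigma>}" and "card H = 4"
    and "billiard_sequence \<Gamma> z"
    and "minimal_period z p" and "p \<ge> 3"
    and "st_sym_group n z = H"
  shows "even p \<and>
    (let I = ((\<forall>i. \<rho> (z i) = z (p div 2 + i)) \<and>
              (\<exists>!k. 0 \<le> k \<and> k < p \<and> (\<forall>i. \<sigma> (z i) = z (k - i))));
         II = ((\<exists>k. 0 < k \<and> k < p \<and> odd k \<and> (\<forall>i. \<rho> (z i) = z (k - i)) \<and>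
                  (\<forall>k'. 0 \<le> k' \<and> k' < p \<and> (\<forall>i. \<rho> (z i) = z (k' - i)) \<longrightarrow> k' = k)) \<and>
               ((\<forall>i. \<sigma> (z i) = z (p div 2 + i)) \<or> (\<forall>i. (\<rho> \<circ> \<sigma>) (z i) = z (p div 2 + i))))
     in (I \<and> \<not> II) \<or> (II \<and> \<not> I))"
proof -
  have rho: "\<rho> = uminus" by (rule rotD_involution_eq_uminus[OF assms(3-5)])
  have "\<rho> \<in> st_sym_group n z" "\<sigma> \<in> st_sym_group n z"
    using generators_in_gen_subgroup[of "{\<rho>, \<sigma>}"] assms(7,12) by auto
  then interpret klein_symmetric_orbit z p \<rho> \<sigma>
    using symmetric_billiard_orbit_klein[OF assms(2,9-11,6)] rho by simp
  show ?thesis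
    using classification unfolding type_I_def type_II_def Let_def .
qed

end
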